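(* Let $-\infty\le a<\infty$ and let $s$ be a positive, twice differentiable function on $(a,\infty)$ such that $b=-\log s$ is convex. Suppose the Laplace transform $L(\lambda)=e^{k(\lambda)}=\int_a^\infty e^{-\lambda x}s(x)\,dx$ is finite on a nonempty open interval $\Lambda$. Let $\lambda_1<\lambda_2$ be in $\Lambda$, $p\in(0,1)$, and set $$p_1=pe^{-k(\lambda_1)},\quad p_2=(1-p)e^{-k(\lambda_2)},\quad c=\frac{\lambda_2-\lambda_1}{2},\quad d=\log\sqrt{p_1/p_2}.$$ Assume that for all $x>a$ we have $b''(x)>0$ and $$\frac{c}{\sqrt{b''(x)}}\le\cosh(cx+d).$$ Then the probability density on $(a,\infty)$ $$f(x)=\left(pe^{-\lambda_1x-k(\lambda_1)}+(1-p)e^{-\lambda_2x-k(\lambda_2)}\right)s(x)$$ has a nondecreasing hazard rate $x\mapsto f(x)/\int_x^\infty f(t)\,dt$ on $(a,\infty)$.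
   Context: The hazard rate of a probability density $f$ on $(a,\infty)$ is $h(x)=f(x)/\int_x^\infty f(t)\,dt$. *)

theory Defs
  imports "HOL-Analysis.Analysis"
begin

definition laplace_tr :: "ereal \<Rightarrow> (real \<Rightarrow> real) \<Rightarrow> real \<Rightarrow> real" where
  "laplace_tr a s lam = (LINT x:{x. a < ereal x}|lborel. exp (- lam * x) * s x)"

definition hazard_rate :: "(real \<Rightarrow> real) \<Rightarrow> real \<Rightarrow> real" where
  "hazard_rate f x = f x / (LINT t:{x<..}|lborel. f t)"

end

theory Submission
  imports Defs
begin

(* A positive integrable density f on an upward closed set D
   has a nondecreasing hazard rate as soon as it is log-concave in the
   sense that the increments ln f (x + \<delta>) - ln f x decrease in x: the
   tail integral from x, shifted to start at y, then dominates the tail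
   from y pointwise up to the factor f y / f x.  The increment condition
   follows from a nonpositive second derivative of ln f.

   For the mixture density f = (A + B) * s with A z = p1 exp (-lam1 z) and
   B z = p2 exp (-lam2 z) we have ln f = ln (A + B) - b, and the second
   derivative of ln (A + B) is exactly c^2 / cosh (c z + d)^2.  The
   hypothesis c / sqrt b'' \<le> cosh (c z + d) therefore says precisely that
   (ln f)'' \<le> 0. *)

lemma ereal_halfline_open_upclosed:
  fixes a :: ereal
  shows "open {x::real. a < ereal x}"
    and "x \<in> {x. a < ereal x} \<Longrightarrow> x \<le> y \<Longrightarrow> y \<in> {x. a < ereal x}"
  by (auto intro!: open_Collect_less continuous_intros intro: less_le_trans)

lemma set_integral_Ioi_pos:
  fixes f :: "real \<Rightarrow> real"
  assumes pos: "\<And>u. t < u \<Longrightarrow> 0 < f u"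
    and int: "set_integrable lborel {t<..} f"
  shows "0 < (LINT u:{t<..}|lborel. f u)"
proof -
  have nonneg: "0 \<le> (LINT u:{t<..}|lborel. f u)"
    unfolding set_lebesgue_integral_def using pos
    by (intro integral_nonneg_AE) (auto simp: indicator_def intro!: AE_I2 less_imp_le)
  have "(LINT u:{t<..}|lborel. f u) \<noteq> 0"
  proof
    assume zero: "(LINT u:{t<..}|lborel. f u) = 0"
    have ind: "(\<lambda>x. indicator {t<..} x * (indicator {t<..} x * f x) :: real)
        = (\<lambda>x. indicator {t<..} x * f x)"
      by (auto simp: indicator_def fun_eq_iff)
    have "{t<..} \<in> null_sets lborel"
      by (rule null_if_pos_func_has_zero_int[where f="\<lambda>u. indicator {t<..} u * f u"])
         (use int zero pos in \<open>auto simp: set_integrable_def set_lebesgue_integral_def ind\<close>)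
    then have "{t<..t+1} \<in> null_sets lborel"
      by (rule null_sets_subset) auto
    then show False
      by (simp add: null_sets_def)
  qed
  with nonneg show ?thesis
    by simp
qed

lemma set_integral_Ioi_shift:
  fixes f :: "real \<Rightarrow> real"
  assumes int: "set_integrable lborel {x<..} f"
  shows "set_integrable lborel {x+\<delta><..} (\<lambda>u. f (u - \<delta>))"
    and "(LINT u:{x<..}|lborel. f u) = (LINT u:{x+\<delta><..}|lborel. f (u - \<delta>))"
proof -
  have shifted: "(\<lambda>u. indicator {x<..} (-\<delta> + 1 * u) *\<^sub>R f (-\<delta> + 1 * u))
      = (\<lambda>u. indicator {x+\<delta><..} u *\<^sub>R f (u - \<delta>))"
    by (auto simp: indicator_def fun_eq_iff algebra_simps)
  have "integrable lborel (\<lambda>u. indicator {x<..} (-\<delta> + 1 * u) *\<^sub>R f (-\<delta> + 1 * u))"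
    by (rule lborel_integrable_real_affine[OF int[unfolded set_integrable_def]]) simp
  then show "set_integrable lborel {x+\<delta><..} (\<lambda>u. f (u - \<delta>))"
    unfolding shifted set_integrable_def .
  have "(LINT u:{x<..}|lborel. f u)
      = \<bar>1\<bar> *\<^sub>R integral\<^sup>L lborel (\<lambda>u. indicator {x<..} (-\<delta> + 1 * u) *\<^sub>R f (-\<delta> + 1 * u))"
    unfolding set_lebesgue_integral_def by (rule lborel_integral_real_affine) simp
  also have "\<dots> = (LINT u:{x+\<delta><..}|lborel. f (u - \<delta>))"
    unfolding shifted set_lebesgue_integral_def by simp
  finally show "(LINT u:{x<..}|lborel. f u) = (LINT u:{x+\<delta><..}|lborel. f (u - \<delta>))" .
qed

lemma hazard_rate_mono_on:
  fixes f :: "real \<Rightarrow> real" and D :: "real set"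
  assumes up: "\<And>x y. x \<in> D \<Longrightarrow> x \<le> y \<Longrightarrow> y \<in> D"
    and pos: "\<And>x. x \<in> D \<Longrightarrow> 0 < f x"
    and int: "set_integrable lborel D f"
    and ratio: "\<And>x w \<delta>. x \<in> D \<Longrightarrow> x \<le> w \<Longrightarrow> 0 \<le> \<delta> \<Longrightarrow> f (w+\<delta>) * f x \<le> f (x+\<delta>) * f w"
  shows "mono_on D (hazard_rate f)"
proof (rule mono_onI)
  define S where "S t = (LINT u:{t<..}|lborel. f u)" for t
  have tail_sub: "{t<..} \<subseteq> D" if "t \<in> D" for t
    using up that by auto
  have tail_int: "set_integrable lborel {t<..} f" if "t \<in> D" for t
    by (rule set_integrable_subset[OF int _ tail_sub[OF that]]) simp
  have S_pos: "0 < S t" if "t \<in> D" for t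
    unfolding S_def using pos tail_sub[OF that] tail_int[OF that]
    by (intro set_integral_Ioi_pos) auto
  fix x y assume x: "x \<in> D" and y: "y \<in> D" and xy: "x \<le> y"
  define \<delta> where "\<delta> = y - x"
  have y_eq: "y = x + \<delta>"
    by (simp add: \<delta>_def)
  note shift = set_integral_Ioi_shift[OF tail_int[OF x], of \<delta>, folded y_eq]
  have "f x * S y = (LINT u:{y<..}|lborel. f x * f u)"
    unfolding S_def by (simp add: set_integral_mult_right)
  also have "\<dots> \<le> (LINT u:{y<..}|lborel. f y * f (u - \<delta>))"
  proof (rule set_integral_mono)
    show "set_integrable lborel {y<..} (\<lambda>u. f x * f u)"
      using tail_int[OF y] by (rule set_integrable_mult_right)
    show "set_integrable lborel {y<..} (\<lambda>u. f y * f (u - \<delta>))"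
      using shift(1) by (rule set_integrable_mult_right)
    fix u assume "u \<in> {y<..}"
    then have "f ((u - \<delta>) + \<delta>) * f x \<le> f (x + \<delta>) * f (u - \<delta>)"
      using x xy by (intro ratio) (auto simp: \<delta>_def)
    then show "f x * f u \<le> f y * f (u - \<delta>)"
      by (simp add: y_eq mult.commute)
  qed
  also have "\<dots> = f y * S x"
    by (simp add: S_def shift(2) set_integral_mult_right)
  finally have "f x * S y \<le> f y * S x" .
  then show "hazard_rate f x \<le> hazard_rate f y"
    unfolding hazard_rate_def S_def[symmetric]
    using S_pos[OF x] S_pos[OF y] by (simp add: divide_simps mult.commute)
qed

lemma increments_antimono_of_deriv2_nonpos:
  fixes \<phi> \<phi>' \<phi>'' :: "real \<Rightarrow> real" and D :: "real set"
  assumes up: "\<And>x y. x \<in> D \<Longrightarrow> x \<le> y \<Longrightarrow> y \<in> D"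
    and d1: "\<And>z. z \<in> D \<Longrightarrow> (\<phi> has_real_derivative \<phi>' z) (at z)"
    and d2: "\<And>z. z \<in> D \<Longrightarrow> (\<phi>' has_real_derivative \<phi>'' z) (at z)"
    and nonpos: "\<And>z. z \<in> D \<Longrightarrow> \<phi>'' z \<le> 0"
    and x: "x \<in> D" and xw: "x \<le> w" and \<delta>: "0 \<le> \<delta>"
  shows "\<phi> (w+\<delta>) - \<phi> w \<le> \<phi> (x+\<delta>) - \<phi> x"
proof -
  have deriv_antimono: "\<phi>' v \<le> \<phi>' u" if "u \<in> D" "u \<le> v" for u v
    by (rule DERIV_nonpos_imp_nonincreasing[OF \<open>u \<le> v\<close>]) (use d2 nonpos up that in blast)
  have "(\<lambda>z. \<phi> (z+\<delta>) - \<phi> z) w \<le> (\<lambda>z. \<phi> (z+\<delta>) - \<phi> z) x"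
  proof (rule DERIV_nonpos_imp_nonincreasing[OF xw])
    fix z assume "x \<le> z" "z \<le> w"
    then have z: "z \<in> D" and z\<delta>: "z + \<delta> \<in> D"
      using up x \<delta> by auto
    have "((\<lambda>z. \<phi> (z+\<delta>) - \<phi> z) has_real_derivative \<phi>' (z+\<delta>) * 1 - \<phi>' z) (at z)"
      by (intro DERIV_diff DERIV_chain2[where g="\<lambda>z. z+\<delta>", OF d1[OF z\<delta>]] d1[OF z])
         (auto intro!: derivative_eq_intros)
    moreover have "\<phi>' (z+\<delta>) * 1 - \<phi>' z \<le> 0"
      using deriv_antimono[OF z, of "z+\<delta>"] \<delta> by simp
    ultimately show "\<exists>y. ((\<lambda>z. \<phi> (z+\<delta>) - \<phi> z) has_real_derivative y) (at z) \<and> y \<le> 0"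
      by blast
  qed
  then show ?thesis
    by simp
qed

lemma hazard_rate_mono_on_of_log_deriv2_nonpos:
  fixes f \<phi> \<phi>' \<phi>'' :: "real \<Rightarrow> real" and D :: "real set"
  assumes up: "\<And>x y. x \<in> D \<Longrightarrow> x \<le> y \<Longrightarrow> y \<in> D"
    and pos: "\<And>x. x \<in> D \<Longrightarrow> 0 < f x"
    and int: "set_integrable lborel D f"
    and ln_f: "\<And>z. z \<in> D \<Longrightarrow> \<phi> z = ln (f z)"
    and d1: "\<And>z. z \<in> D \<Longrightarrow> (\<phi> has_real_derivative \<phi>' z) (at z)"
    and d2: "\<And>z. z \<in> D \<Longrightarrow> (\<phi>' has_real_derivative \<phi>'' z) (at z)"
    and nonpos: "\<And>z. z \<in> D \<Longrightarrow> \<phi>'' z \<le> 0"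
  shows "mono_on D (hazard_rate f)"
proof (rule hazard_rate_mono_on[OF up pos int])
  fix x w \<delta> :: real
  assume x: "x \<in> D" and xw: "x \<le> w" and \<delta>: "0 \<le> \<delta>"
  have in_D: "w \<in> D" "x + \<delta> \<in> D" "w + \<delta> \<in> D"
    using up x xw \<delta> by auto
  then have f_pos: "0 < f x" "0 < f w" "0 < f (x+\<delta>)" "0 < f (w+\<delta>)"
    using pos x by auto
  have "\<phi> (w+\<delta>) - \<phi> w \<le> \<phi> (x+\<delta>) - \<phi> x"
    by (rule increments_antimono_of_deriv2_nonpos[OF up d1 d2 nonpos x xw \<delta>])
  then have "ln (f (w+\<delta>) * f x) \<le> ln (f (x+\<delta>) * f w)"
    using x in_D f_pos by (simp add: ln_f ln_mult)
  then show "f (w+\<delta>) * f x \<le> f (x+\<delta>) * f w"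
    using f_pos by simp
qed

text \<open>With \<open>A z = p1 e^(-l1 z)\<close> and \<open>B z = p2 e^(-l2 z)\<close> we have \<open>A = B e^(2u)\<close> for
  \<open>u = c z + d\<close>, whence \<open>(A + B)^2 = 4 cosh(u)^2 A B\<close>.\<close>
lemma exp_mixture_cosh_identity:
  fixes p1 p2 l1 l2 z :: real
  assumes p1: "0 < p1" and p2: "0 < p2"
  defines "A \<equiv> p1 * exp (- l1 * z)" and "B \<equiv> p2 * exp (- l2 * z)"
    and "u \<equiv> (l2 - l1) / 2 * z + ln (sqrt (p1 / p2))"
  shows "(A + B)^2 = 4 * cosh u ^ 2 * (A * B)"
proof -
  have "exp u * exp u = exp ((l2 - l1) * z) * exp (ln (sqrt (p1 / p2))) ^ 2"
    by (simp add: u_def power2_eq_square flip: exp_add)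
  then have exp_u: "exp u * exp u = exp ((l2 - l1) * z) * (p1 / p2)"
    using p1 p2 by simp
  have "B * exp u * exp u = p1 * (exp (- l2 * z) * exp ((l2 - l1) * z))"
    using p2 by (simp add: B_def mult.assoc exp_u)
  also have "\<dots> = A"
    by (simp add: A_def mult_exp_exp algebra_simps)
  finally have A_eq: "A = B * exp u * exp u" ..
  show ?thesis
    unfolding A_eq cosh_def by (simp add: exp_minus field_simps power2_eq_square)
qed

lemma exp_mixture_log_derivs:
  fixes p1 p2 l1 l2 :: real
  assumes p1: "0 < p1" and p2: "0 < p2"
  defines "M \<equiv> \<lambda>z. p1 * exp (- l1 * z) + p2 * exp (- l2 * z)"
    and "M' \<equiv> \<lambda>z. - (l1 * p1 * exp (- l1 * z) + l2 * p2 * exp (- l2 * z))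
                       / (p1 * exp (- l1 * z) + p2 * exp (- l2 * z))"
    and "c \<equiv> (l2 - l1) / 2" and "d \<equiv> ln (sqrt (p1 / p2))"
  shows "((\<lambda>z. ln (M z)) has_real_derivative M' z) (at z)"
    and "(M' has_real_derivative (c / cosh (c * z + d))^2) (at z)"
proof -
  define A where "A z = p1 * exp (- l1 * z)" for z
  define B where "B z = p2 * exp (- l2 * z)" for z
  have A: "0 < A z" and B: "0 < B z" for z
    using p1 p2 by (simp_all add: A_def B_def)
  have M: "M z = A z + B z" for z
    by (simp add: M_def A_def B_def)
  show "((\<lambda>z. ln (M z)) has_real_derivative M' z) (at z)"
    unfolding M_def M'_def using A[of z] B[of z]
    by (auto intro!: derivative_eq_intros simp: A_def B_def field_simps)
  have M'_deriv: "(M' has_real_derivative (l2 - l1)^2 * (A z * B z) / (A z + B z)^2) (at z)"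
    unfolding M'_def M using A[of z] B[of z]
    by (auto intro!: derivative_eq_intros simp: A_def B_def field_simps power2_eq_square)
  have cosh_id: "(A z + B z)^2 = 4 * cosh (c * z + d) ^ 2 * (A z * B z)"
    using exp_mixture_cosh_identity[OF p1 p2, of l1 z l2] by (simp add: A_def B_def c_def d_def)
  have "(l2 - l1)^2 * (A z * B z) / (A z + B z)^2
      = (4 * c^2 * (A z * B z)) / (4 * cosh (c * z + d) ^ 2 * (A z * B z))"
    unfolding cosh_id by (simp add: c_def power_divide)
  also have "\<dots> = (c / cosh (c * z + d))^2"
    using A[of z] B[of z] by (simp add: power_divide)
  finally have "(l2 - l1)^2 * (A z * B z) / (A z + B z)^2 = (c / cosh (c * z + d))^2" .
  with M'_deriv show "(M' has_real_derivative (c / cosh (c * z + d))^2) (at z)"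
    by simp
qed

text \<open>The curvature hypothesis of the theorem, rewritten as a comparison of
  second derivatives.\<close>
lemma cosh_bound_imp_square_le:
  fixes c \<beta> u :: real
  assumes "0 \<le> c" and "0 < \<beta>" and "c / sqrt \<beta> \<le> cosh u"
  shows "(c / cosh u)^2 \<le> \<beta>"
proof -
  have "c / cosh u \<le> sqrt \<beta>"
    using assms(2,3) by (simp add: field_simps)
  then have "(c / cosh u)^2 \<le> sqrt \<beta> ^ 2"
    using assms(1) by (intro power_mono) auto
  with assms(2) show ?thesis
    by simp
qed

lemma set_integrable_exp_mixture:
  fixes s :: "real \<Rightarrow> real"
  assumes "set_integrable M D (\<lambda>x. exp (- l1 * x) * s x)"
    and "set_integrable M D (\<lambda>x. exp (- l2 * x) * s x)"
  shows "set_integrable M D (\<lambda>x. (p1 * exp (- l1 * x) + p2 * exp (- l2 * x)) * s x)"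
proof -
  have "set_integrable M D (\<lambda>x. p1 * (exp (- l1 * x) * s x) + p2 * (exp (- l2 * x) * s x))"
    using assms by (intro set_integral_add(1) set_integrable_mult_right)
  then show ?thesis
    by (simp add: algebra_simps)
qed

lemma neg_ln_twice_differentiable:
  fixes s :: "real \<Rightarrow> real" and D :: "real set"
  assumes D: "open D" and z: "z \<in> D"
    and pos: "\<And>x. x \<in> D \<Longrightarrow> 0 < s x"
    and d1: "\<And>x. x \<in> D \<Longrightarrow> s differentiable (at x)"
    and d2: "\<And>x. x \<in> D \<Longrightarrow> deriv s differentiable (at x)"
  defines "b \<equiv> \<lambda>x. - ln (s x)"
  shows "(b has_real_derivative deriv b z) (at z)"
    and "(deriv b has_real_derivative deriv (deriv b) z) (at z)"
proof -
  have ds: "(s has_real_derivative deriv s x) (at x)" if "x \<in> D" for x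
    using d1 that DERIV_deriv_iff_real_differentiable by blast
  have dds: "(deriv s has_real_derivative deriv (deriv s) z) (at z)"
    using d2 z DERIV_deriv_iff_real_differentiable by blast
  have db: "(b has_real_derivative - (deriv s x / s x)) (at x)" if "x \<in> D" for x
    unfolding b_def using ds[OF that] pos[OF that]
    by (auto intro!: derivative_eq_intros simp: field_simps)
  have deriv_b: "deriv b x = - (deriv s x / s x)" if "x \<in> D" for x
    using db[OF that] by (rule DERIV_imp_deriv)
  show "(b has_real_derivative deriv b z) (at z)"
    using db[OF z] by (simp add: deriv_b[OF z])
  have "((\<lambda>x. - (deriv s x / s x)) has_real_derivative
      - ((deriv (deriv s) z * s z - deriv s z * deriv s z) / (s z * s z))) (at z)"
    using ds[OF z] dds pos[OF z] by (auto intro!: derivative_eq_intros simp: field_simps)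
  then have "(deriv b has_real_derivative
      - ((deriv (deriv s) z * s z - deriv s z * deriv s z) / (s z * s z))) (at z)"
    by (rule has_field_derivative_transform_within_open[OF _ D z]) (simp add: deriv_b)
  then show "(deriv b has_real_derivative deriv (deriv b) z) (at z)"
    using DERIV_imp_deriv by metis
qed

theorem proposition2:
  fixes a :: ereal and s :: "real \<Rightarrow> real" and \<Lambda> :: "real set"
    and lam1 lam2 p :: real
  defines "D \<equiv> {x::real. a < ereal x}"
  defines "b \<equiv> (\<lambda>x. - ln (s x))"
  defines "k \<equiv> (\<lambda>lam. ln (laplace_tr a s lam))"
  defines "p1 \<equiv> p * exp (- k lam1)"
  defines "p2 \<equiv> (1 - p) * exp (- k lam2)"
  defines "c \<equiv> (lam2 - lam1) / 2"
  defines "d \<equiv> ln (sqrt (p1 / p2))"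
  defines "f \<equiv> (\<lambda>x. (p * exp (- lam1 * x - k lam1) + (1 - p) * exp (- lam2 * x - k lam2)) * s x)"
  assumes a_fin: "a < \<infinity>"
    and s_pos: "\<forall>x\<in>D. s x > 0"
    and s_diff: "\<forall>x\<in>D. s differentiable (at x)"
    and s_diff2: "\<forall>x\<in>D. deriv s differentiable (at x)"
    and b_convex: "convex_on D b"
    and Lambda_open: "open \<Lambda>" and Lambda_interval: "is_interval \<Lambda>" and Lambda_ne: "\<Lambda> \<noteq> {}"
    and laplace_finite: "\<forall>lam\<in>\<Lambda>. set_integrable lborel D (\<lambda>x. exp (- lam * x) * s x)"
    and lam1: "lam1 \<in> \<Lambda>" and lam2: "lam2 \<in> \<Lambda>" and lam12: "lam1 < lam2"
    and p: "0 < p" "p < 1"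
    and b2_pos: "\<forall>x\<in>D. deriv (deriv b) x > 0"
    and cosh_cond: "\<forall>x\<in>D. c / sqrt (deriv (deriv b) x) \<le> cosh (c * x + d)"
  shows "mono_on D (hazard_rate f)"
proof -
  note up = ereal_halfline_open_upclosed(2)[where a=a, folded D_def]
  note open_D = ereal_halfline_open_upclosed(1)[where a=a, folded D_def]
  have p1_pos: "0 < p1" and p2_pos: "0 < p2"
    using p by (simp_all add: p1_def p2_def)
  define M where "M z = p1 * exp (- lam1 * z) + p2 * exp (- lam2 * z)" for z
  have M_pos: "0 < M z" for z
    using p1_pos p2_pos by (simp add: M_def add_pos_pos)
  have f_eq: "f x = M x * s x" for x
    by (simp add: f_def M_def p1_def p2_def exp_diff exp_minus field_simps)
  have f_pos: "0 < f x" if "x \<in> D" for x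
    using M_pos s_pos that by (simp add: f_eq)
  have f_int: "set_integrable lborel D f"
    unfolding f_eq[abs_def] M_def using laplace_finite lam1 lam2
    by (intro set_integrable_exp_mixture) auto
  define M' where "M' = (\<lambda>z. - (lam1 * p1 * exp (- lam1 * z) + lam2 * p2 * exp (- lam2 * z)) / M z)"
  have dM: "((\<lambda>z. ln (M z)) has_real_derivative M' z) (at z)"
    and dM': "(M' has_real_derivative (c / cosh (c * z + d))^2) (at z)" for z
    unfolding M'_def M_def c_def d_def by (rule exp_mixture_log_derivs[OF p1_pos p2_pos])+
  note db = neg_ln_twice_differentiable[OF open_D _ _ s_diff[rule_format] s_diff2[rule_format],
      folded b_def, OF _ s_pos[rule_format]]
  show ?thesis
  proof (rule hazard_rate_mono_on_of_log_deriv2_nonpos[OF up f_pos f_int])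
    fix z assume z: "z \<in> D"
    show "ln (M z) - b z = ln (f z)"
      using M_pos[of z] s_pos z by (auto simp: b_def f_eq ln_mult)
    show "((\<lambda>z. ln (M z) - b z) has_real_derivative M' z - deriv b z) (at z)"
      using dM db(1)[OF z] by (rule DERIV_diff)
    show "((\<lambda>z. M' z - deriv b z) has_real_derivative
        (c / cosh (c * z + d))^2 - deriv (deriv b) z) (at z)"
      using dM' db(2)[OF z] by (rule DERIV_diff)
    have "(c / cosh (c * z + d))^2 \<le> deriv (deriv b) z"
      using lam12 b2_pos cosh_cond z by (intro cosh_bound_imp_square_le) (auto simp: c_def)
    then show "(c / cosh (c * z + d))^2 - deriv (deriv b) z \<le> 0"
      by simp
  qed
qed

end
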